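(* Let $\hat B$ be the bus susceptance matrix of a connected power network with bus set $\mathcal N$, let $\mathcal T \subseteq \mathcal N$ with $|\mathcal T| \ge 2$, and fix $t \in \mathcal T$. Let $\theta$ be a random vector in $\mathbb R^{\mathcal N}$ with finite second moments and $\theta_t = 0$; let $S$ be a random bus uniformly distributed on $\mathcal T \setminus \{t\}$; and let $\Gamma$ be a real random variable with mean $0$ and variance $\sigma_\Gamma^2$; assume $\theta$, $S$, $\Gamma$ are mutually independent. Let $\hat\theta$ be the random vector with $\hat\theta_t = 0$ and $\hat B\hat\theta = \hat B\theta + \Gamma u^{S,t}$. Then $$\sigma^2_{\hat\theta} \;=\; \sigma^2_{\theta} + \frac{\sigma_\Gamma^2}{|\mathcal T| - 1}\sum_{s \in \mathcal T\setminus\{t\}} v^{s,t}(v^{s,t})^\top,$$ where $\sigma^2_X$ denotes the covariance matrix of a random vector $X$.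
   Context: DC power flow model: each line $km$ has reactance $x_{km} > 0$, and $\hat B_{kk} = \sum_{km \ni k} 1/x_{km}$, $\hat B_{km} = -1/x_{km}$ for a line $km$, $\hat B_{km} = 0$ otherwise. For distinct buses $s,t$, $u^{s,t}_s = 1$, $u^{s,t}_t = -1$, $u^{s,t}_k = 0$ otherwise, and $v^{s,t}$ is the unique vector with $\hat B v^{s,t} = u^{s,t}$ and $v^{s,t}_t = 0$. (In the paper $\theta$ represents phase angles with reference bus $t$ absent the defense, $\hat\theta$ the phase angles after the random injection $\Gamma$ at $S$ and $-\Gamma$ at $t$.) *)

theory Defs
  imports "HOL-Analysis.Analysis" "HOL-Probability.Probability"
begin

text \<open>Buses are the elements of a finite type 'n (the bus set N = UNIV).
  Lines are given by a symmetric irreflexive relation E; line km has reactance x k m.\<close>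

definition susceptance :: "('n::finite \<times> 'n) set \<Rightarrow> ('n \<Rightarrow> 'n \<Rightarrow> real) \<Rightarrow> real^'n^'n" where
  "susceptance E x = (\<chi> k m. if k = m then (\<Sum>j\<in>{j. (k,j) \<in> E}. 1 / x k j)
                              else if (k,m) \<in> E then - 1 / x k m else 0)"

definition valid_network :: "('n::finite \<times> 'n) set \<Rightarrow> ('n \<Rightarrow> 'n \<Rightarrow> real) \<Rightarrow> bool" where
  "valid_network E x \<longleftrightarrow> sym E \<and> irrefl E \<and> (\<forall>k m. x k m = x m k)
     \<and> (\<forall>(k,m)\<in>E. x k m > 0)"

definition connected_network :: "('n \<times> 'n) set \<Rightarrow> bool" where
  "connected_network E \<longleftrightarrow> (\<forall>k m. (k,m) \<in> E\<^sup>*)"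

definition uvec :: "'n::finite \<Rightarrow> 'n \<Rightarrow> real^'n" where
  "uvec s t = (\<chi> k. if k = s then 1 else if k = t then -1 else 0)"

definition vvec :: "real^'n^'n \<Rightarrow> 'n::finite \<Rightarrow> 'n \<Rightarrow> real^'n" where
  "vvec B s t = (THE v. B *v v = uvec s t \<and> v $ t = 0)"

definition outer :: "real^'n \<Rightarrow> real^'n \<Rightarrow> real^'n^'n" where
  "outer a b = (\<chi> i j. a $ i * b $ j)"

definition cov_matrix :: "'a measure \<Rightarrow> ('a \<Rightarrow> real^'n) \<Rightarrow> real^'n^'n" where
  "cov_matrix M X = (\<chi> i j. integral\<^sup>L M (\<lambda>\<omega>.
      (X \<omega> $ i - integral\<^sup>L M (\<lambda>\<eta>. X \<eta> $ i)) * (X \<omega> $ j - integral\<^sup>L M (\<lambda>\<eta>. X \<eta> $ j))))"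

definition indep3 :: "'a measure \<Rightarrow> 'b measure \<Rightarrow> 'c measure \<Rightarrow> 'd measure
    \<Rightarrow> ('a \<Rightarrow> 'b) \<Rightarrow> ('a \<Rightarrow> 'c) \<Rightarrow> ('a \<Rightarrow> 'd) \<Rightarrow> bool" where
  "indep3 M N1 N2 N3 X Y Z \<longleftrightarrow>
     (\<forall>A\<in>sets N1. \<forall>B\<in>sets N2. \<forall>C\<in>sets N3.
        measure M {\<omega>\<in>space M. X \<omega> \<in> A \<and> Y \<omega> \<in> B \<and> Z \<omega> \<in> C}
        = measure M {\<omega>\<in>space M. X \<omega> \<in> A} * measure M {\<omega>\<in>space M. Y \<omega> \<in> B}
          * measure M {\<omega>\<in>space M. Z \<omega> \<in> C})"

end

theory Submission
  imports Defs
begin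

(*
  The susceptance matrix B has zero column sums, and on a connected network
  its kernel consists of the constant vectors, by the maximum principle.  Hence
  the system B v = u, v_t = 0 is uniquely solvable for every u with zero sum, and
  by linearity the perturbed angles are theta_hat = theta + Gamma v^{S,t}.  Expanding
  the covariance, independence and E Gamma = 0 kill the cross terms, leaving
  E[Gamma^2] E[v^{S,t} (v^{S,t})^T], which is the stated average since S is
  uniform on T - {t}.
*)

lemma valid_networkD:
  assumes "valid_network E x"
  shows "sym E" and "irrefl E" and "x k m = x m k" and "(k, m) \<in> E \<Longrightarrow> x k m > 0"
proof -
  show "sym E" "irrefl E" "x k m = x m k"
    using assms unfolding valid_network_def by blast+
  have "\<forall>(k, m)\<in>E. x k m > 0"
    using assms unfolding valid_network_def by blast
  then show "(k, m) \<in> E \<Longrightarrow> x k m > 0"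
    by auto
qed

lemma susceptance_mult_nth:
  assumes "irrefl E"
  shows "(susceptance E x *v w) $ k = (\<Sum>j\<in>{j. (k, j) \<in> E}. (w $ k - w $ j) / x k j)"
proof -
  have "(k, k) \<notin> E" using assms by (simp add: irrefl_def)
  then have "{m \<in> UNIV - {k}. (k, m) \<in> E} = {j. (k, j) \<in> E}"
    by auto
  moreover have "(\<Sum>m\<in>UNIV - {k}. susceptance E x $ k $ m * w $ m)
      = (\<Sum>m\<in>UNIV - {k}. if (k, m) \<in> E then - (w $ m / x k m) else 0)"
    by (intro sum.cong) (auto simp: susceptance_def)
  ultimately have off_diag: "(\<Sum>m\<in>UNIV - {k}. susceptance E x $ k $ m * w $ m)
      = (\<Sum>j\<in>{j. (k, j) \<in> E}. - (w $ j / x k j))"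
    by (simp add: sum.inter_filter[symmetric])
  have "(susceptance E x *v w) $ k
      = susceptance E x $ k $ k * w $ k + (\<Sum>m\<in>UNIV - {k}. susceptance E x $ k $ m * w $ m)"
    by (simp add: matrix_vector_mult_def sum.remove)
  also have "\<dots> = susceptance E x $ k $ k * w $ k - (\<Sum>j\<in>{j. (k, j) \<in> E}. w $ j / x k j)"
    by (simp add: off_diag sum_negf)
  also have "\<dots> = (\<Sum>j\<in>{j. (k, j) \<in> E}. (w $ k - w $ j) / x k j)"
    by (simp add: susceptance_def sum_subtractf diff_divide_distrib sum_distrib_right)
  finally show ?thesis .
qed

lemma sum_susceptance_mult:
  assumes "valid_network E x"
  shows "(\<Sum>k\<in>UNIV. (susceptance E x *v w) $ k) = 0"
proof -
  have "sym E" and "irrefl E"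
    using assms by (rule valid_networkD)+
  define F where "F p = (w $ fst p - w $ snd p) / x (fst p) (snd p)" for p
  have "(\<Sum>k\<in>UNIV. (susceptance E x *v w) $ k) = (\<Sum>k\<in>UNIV. \<Sum>j\<in>{j. (k, j) \<in> E}. F (k, j))"
    by (simp add: susceptance_mult_nth[OF \<open>irrefl E\<close>] F_def)
  also have "\<dots> = sum F E"
    by (subst sum.Sigma) (auto intro!: sum.cong)
  finally have sum_F: "(\<Sum>k\<in>UNIV. (susceptance E x *v w) $ k) = sum F E" .
  \<comment> \<open>Each line contributes opposite amounts to the rows of its two end buses.\<close>
  have "bij_betw prod.swap E E"
    using \<open>sym E\<close> unfolding bij_betw_def sym_def image_def
    by (auto intro!: inj_onI) (metis swap_simp)
  then have "sum F E = (\<Sum>p\<in>E. F (prod.swap p))"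
    by (rule sum.reindex_bij_betw[symmetric])
  also have "\<dots> = - sum F E"
    by (simp add: F_def sum_negf[symmetric] valid_networkD(3)[OF assms] minus_divide_left)
  finally show ?thesis using sum_F by simp
qed

lemma susceptance_kernel_const:
  assumes net: "valid_network E x" and conn: "connected_network E"
    and w: "susceptance E x *v w = 0"
  shows "w $ k = w $ m"
proof -
  have "irrefl E"
    using net by (rule valid_networkD)
  note x_pos = valid_networkD(4)[OF net]
  have "Max (range (\<lambda>j. w $ j)) \<in> range (\<lambda>j. w $ j)"
    by (intro Max_in) auto
  then obtain k0 where k0: "Max (range (\<lambda>j. w $ j)) = w $ k0"
    by (rule rangeE)
  have k0_max: "w $ j \<le> w $ k0" for j
    unfolding k0[symmetric] by (intro Max_ge) auto
  have "w $ j = w $ k0" if "(k0, j) \<in> E\<^sup>*" for j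
    using that
  proof (induction rule: rtrancl_induct)
    case (step y z)
    \<comment> \<open>At a maximum of w, row y of B w = 0 is a vanishing sum of nonnegative terms.\<close>
    have sum0: "(\<Sum>j\<in>{j. (y, j) \<in> E}. (w $ y - w $ j) / x y j) = 0"
      using w susceptance_mult_nth[OF \<open>irrefl E\<close>, where x = x and w = w and k = y] by simp
    have nonneg: "0 \<le> (w $ y - w $ j) / x y j" if "j \<in> {j. (y, j) \<in> E}" for j
      using that step.IH k0_max[of j] x_pos[of y j] by (simp add: divide_nonneg_pos)
    have "(w $ y - w $ z) / x y z = 0"
      using sum_nonneg_0[OF finite nonneg sum0] step.hyps(2) by simp
    then show ?case using x_pos[OF step.hyps(2)] step.IH by simp
  qed simp
  then show ?thesis using conn by (metis connected_network_def)
qed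

lemma susceptance_grounded_kernel:
  assumes "valid_network E x" and "connected_network E"
    and "susceptance E x *v w = 0" and "w $ t = 0"
  shows "w = 0"
  using susceptance_kernel_const[OF assms(1-3), of _ t] assms(4) by (simp add: vec_eq_iff)

lemma vec_eq_if_sum_eq_and_eq_off:
  fixes a b :: "'a::ab_group_add^'n::finite"
  assumes "(\<Sum>k\<in>UNIV. a $ k) = (\<Sum>k\<in>UNIV. b $ k)" and "\<And>k. k \<noteq> t \<Longrightarrow> a $ k = b $ k"
  shows "a = b"
proof -
  have "(\<Sum>k\<in>UNIV - {t}. a $ k) = (\<Sum>k\<in>UNIV - {t}. b $ k)"
    using assms(2) by simp
  then have "a $ t = b $ t"
    using assms(1) by (simp add: sum.remove[of UNIV t])
  then show ?thesis using assms(2) by (metis vec_eq_iff)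
qed

lemma grounded_system_ex1:
  fixes B :: "real^'n^'n::finite"
  assumes col_sum: "\<And>w. (\<Sum>k\<in>UNIV. (B *v w) $ k) = 0"
    and ker: "\<And>w. B *v w = 0 \<Longrightarrow> w $ t = 0 \<Longrightarrow> w = 0"
    and u_sum: "(\<Sum>k\<in>UNIV. u $ k) = 0"
  shows "\<exists>!v. B *v v = u \<and> v $ t = 0"
proof -
  \<comment> \<open>Row t of B is redundant; replacing it by the grounding equation gives an invertible map.\<close>
  define f :: "real^'n \<Rightarrow> real^'n" where "f w = (\<chi> k. if k = t then w $ t else (B *v w) $ k)" for w
  have "linear f"
    by (rule linearI) (auto simp: f_def vec_eq_iff matrix_vector_right_distrib matrix_vector_mult_scaleR)
  moreover have "w = 0" if "f w = 0" for w
  proof -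
    have rows: "\<forall>k. (if k = t then w $ t else (B *v w) $ k) = 0"
      using that by (simp add: f_def vec_eq_iff)
    have "w $ t = 0"
      using rows[rule_format, of t] by simp
    moreover have off: "(B *v w) $ k = 0" if "k \<noteq> t" for k
      using rows[rule_format, of k] that by simp
    moreover have "B *v w = 0"
      by (rule vec_eq_if_sum_eq_and_eq_off[of _ _ t]) (simp_all add: col_sum off)
    ultimately show ?thesis using ker by simp
  qed
  ultimately have "surj f"
    by (simp add: linear_inj_imp_surj linear_injective_0)
  then obtain v where v: "f v = (\<chi> k. if k = t then 0 else u $ k)"
    by (metis surjD)
  have rows: "\<forall>k. (if k = t then v $ t else (B *v v) $ k) = (if k = t then 0 else u $ k)"
    using v by (simp add: f_def vec_eq_iff)
  have "v $ t = 0"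
    using rows[rule_format, of t] by simp
  have off: "(B *v v) $ k = u $ k" if "k \<noteq> t" for k
    using rows[rule_format, of k] that by simp
  have "B *v v = u"
    by (rule vec_eq_if_sum_eq_and_eq_off[of _ _ t]) (simp_all add: col_sum u_sum off)
  show ?thesis
  proof (rule ex1I[of _ v])
    show "B *v v = u \<and> v $ t = 0"
      using \<open>B *v v = u\<close> \<open>v $ t = 0\<close> ..
    fix w
    assume "B *v w = u \<and> w $ t = 0"
    then show "w = v"
      using ker[of "w - v"] \<open>B *v v = u\<close> \<open>v $ t = 0\<close> by (simp add: matrix_vector_mult_diff_distrib)
  qed
qed

lemma sum_uvec: "(\<Sum>k\<in>UNIV. uvec s t $ k) = (if s = t then 1 else 0)"
proof (cases "s = t")
  case False
  then have "uvec s t $ k = (if k = s then 1 else 0) - (if k = t then 1 else 0)" for k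
    by (simp add: uvec_def)
  then show ?thesis using False by (simp add: sum_subtractf)
next
  case True
  then have "uvec s t $ k = (if k = t then 1 else 0)" for k
    by (simp add: uvec_def)
  then show ?thesis using True by simp
qed

lemma vvec_susceptance:
  assumes "valid_network E x" and "connected_network E" and "s \<noteq> t"
  shows "susceptance E x *v vvec (susceptance E x) s t = uvec s t"
    and "vvec (susceptance E x) s t $ t = 0"
proof -
  have "\<exists>!v. susceptance E x *v v = uvec s t \<and> v $ t = 0"
  proof (rule grounded_system_ex1)
    show "(\<Sum>k\<in>UNIV. (susceptance E x *v w) $ k) = 0" for w
      using assms(1) by (rule sum_susceptance_mult)
    show "w = 0" if "susceptance E x *v w = 0" and "w $ t = 0" for w
      using assms(1,2) that by (rule susceptance_grounded_kernel)
    show "(\<Sum>k\<in>UNIV. uvec s t $ k) = 0"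
      using assms(3) by (simp add: sum_uvec)
  qed
  then have "susceptance E x *v vvec (susceptance E x) s t = uvec s t
      \<and> vvec (susceptance E x) s t $ t = 0"
    unfolding vvec_def by (rule theI')
  then show "susceptance E x *v vvec (susceptance E x) s t = uvec s t"
    and "vvec (susceptance E x) s t $ t = 0"
    by simp_all
qed

lemma susceptance_injection_response:
  assumes net: "valid_network E x" and conn: "connected_network E"
    and "a $ t = 0" and "b $ t = 0"
    and eq: "susceptance E x *v b = susceptance E x *v a + g *\<^sub>R uvec s t"
  shows "b = a + g *\<^sub>R vvec (susceptance E x) s t"
proof (cases "s = t")
  case True
  \<comment> \<open>Here g = 0 since uvec t t does not sum to zero, so the junk value vvec B t t is irrelevant.\<close>
  have "(\<Sum>k\<in>UNIV. (susceptance E x *v b) $ k)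
      = (\<Sum>k\<in>UNIV. (susceptance E x *v a) $ k) + g * (\<Sum>k\<in>UNIV. uvec s t $ k)"
    unfolding eq by (simp add: sum.distrib sum_distrib_left)
  then have "g = 0"
    using True by (simp add: sum_susceptance_mult[OF net] sum_uvec)
  then have "susceptance E x *v (b - a) = 0"
    using eq by (simp add: matrix_vector_mult_diff_distrib)
  moreover have "(b - a) $ t = 0"
    using assms(3,4) by simp
  ultimately have "b - a = 0"
    by (rule susceptance_grounded_kernel[OF net conn])
  then show ?thesis
    using \<open>g = 0\<close> by simp
next
  case False
  let ?r = "b - a - g *\<^sub>R vvec (susceptance E x) s t"
  have "susceptance E x *v ?r = 0"
    using eq vvec_susceptance(1)[OF net conn False]
    by (simp add: matrix_vector_mult_diff_distrib matrix_vector_mult_scaleR)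
  moreover have "?r $ t = 0"
    using assms(3,4) vvec_susceptance(2)[OF net conn False] by simp
  ultimately have "?r = 0"
    by (rule susceptance_grounded_kernel[OF net conn])
  then show ?thesis
    by (simp add: algebra_simps)
qed

lemma (in prob_space) indep3_integral_mult:
  fixes f :: "'b \<Rightarrow> real" and g :: "'c \<Rightarrow> real" and h :: "'d \<Rightarrow> real"
  assumes indep: "indep3 M N1 N2 N3 X Y Z"
    and meas[measurable]: "X \<in> measurable M N1" "Y \<in> measurable M N2" "Z \<in> measurable M N3"
      "f \<in> borel_measurable N1" "g \<in> borel_measurable N2" "h \<in> borel_measurable N3"
    and int: "integrable M (\<lambda>\<omega>. f (X \<omega>))" "integrable M (\<lambda>\<omega>. g (Y \<omega>))"
      "integrable M (\<lambda>\<omega>. h (Z \<omega>))"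
  shows "integrable M (\<lambda>\<omega>. f (X \<omega>) * g (Y \<omega>) * h (Z \<omega>))"
    and "(\<integral>\<omega>. f (X \<omega>) * g (Y \<omega>) * h (Z \<omega>) \<partial>M)
       = (\<integral>\<omega>. f (X \<omega>) \<partial>M) * (\<integral>\<omega>. g (Y \<omega>) \<partial>M) * (\<integral>\<omega>. h (Z \<omega>) \<partial>M)"
proof -
  define F :: "nat \<Rightarrow> 'a \<Rightarrow> real" where
    "F i = (if i = 0 then f \<circ> X else if i = 1 then g \<circ> Y else h \<circ> Z)" for i
  have "(\<lambda>\<omega>. f (X \<omega>)) \<in> borel_measurable M" "(\<lambda>\<omega>. g (Y \<omega>)) \<in> borel_measurable M"
    "(\<lambda>\<omega>. h (Z \<omega>)) \<in> borel_measurable M"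
    by measurable
  then have F_rv: "random_variable borel (F i)" for i
    by (simp add: F_def comp_def)
  have "indep_vars (\<lambda>_. borel) F {0, 1, 2}"
  proof (rule indep_vars_finite[where E = "\<lambda>_. sets borel", THEN iffD2])
    show "\<forall>A\<in>\<Pi> i\<in>{0, 1, 2}. sets borel. prob (\<Inter>j\<in>{0, 1, 2}. F j -` A j \<inter> space M)
        = (\<Prod>j\<in>{0, 1, 2}. prob (F j -` A j \<inter> space M))"
    proof
      fix A :: "nat \<Rightarrow> real set"
      assume "A \<in> (\<Pi> i\<in>{0, 1, 2}. sets borel)"
      then have A_sets: "A 0 \<in> sets borel" "A 1 \<in> sets borel" "A 2 \<in> sets borel"
        by auto
      define A0 A1 A2 where "A0 = f -` A 0 \<inter> space N1" and "A1 = g -` A 1 \<inter> space N2"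
        and "A2 = h -` A 2 \<inter> space N3"
      have "A0 \<in> sets N1" "A1 \<in> sets N2" "A2 \<in> sets N3"
        unfolding A0_def A1_def A2_def using meas(4-6) A_sets by (auto intro!: measurable_sets)
      have pre0: "F 0 -` A 0 \<inter> space M = {\<omega>\<in>space M. X \<omega> \<in> A0}"
        using measurable_space[OF meas(1)] by (auto simp: F_def A0_def)
      have pre1: "F 1 -` A 1 \<inter> space M = {\<omega>\<in>space M. Y \<omega> \<in> A1}"
        using measurable_space[OF meas(2)] by (auto simp: F_def A1_def)
      have pre2: "F 2 -` A 2 \<inter> space M = {\<omega>\<in>space M. Z \<omega> \<in> A2}"
        using measurable_space[OF meas(3)] by (auto simp: F_def A2_def)
      have "(\<Inter>j\<in>{0, 1, 2}. F j -` A j \<inter> space M)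
          = {\<omega>\<in>space M. X \<omega> \<in> A0 \<and> Y \<omega> \<in> A1 \<and> Z \<omega> \<in> A2}"
        by (simp only: INT_insert INT_empty pre0 pre1 pre2) blast
      also have "prob \<dots> = prob {\<omega>\<in>space M. X \<omega> \<in> A0} * prob {\<omega>\<in>space M. Y \<omega> \<in> A1}
          * prob {\<omega>\<in>space M. Z \<omega> \<in> A2}"
        using indep \<open>A0 \<in> sets N1\<close> \<open>A1 \<in> sets N2\<close> \<open>A2 \<in> sets N3\<close> unfolding indep3_def by blast
      also have "\<dots> = (\<Prod>j\<in>{0, 1, 2}. prob (F j -` A j \<inter> space M))"
        by (simp add: pre0 pre1[unfolded One_nat_def] pre2 mult.assoc)
      finally show "prob (\<Inter>j\<in>{0, 1, 2}. F j -` A j \<inter> space M)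
          = (\<Prod>j\<in>{0, 1, 2}. prob (F j -` A j \<inter> space M))" .
    qed
  qed (auto simp: F_rv Int_stable_def sets.sigma_sets_eq[of borel, simplified])
  moreover have "integrable M (F i)" for i
    using int by (simp add: F_def comp_def)
  moreover have "(\<Prod>i\<in>{0, 1, 2}. F i \<omega>) = f (X \<omega>) * g (Y \<omega>) * h (Z \<omega>)" for \<omega>
    by (simp add: F_def)
  moreover have "(\<Prod>i\<in>{0, 1, 2}. integral\<^sup>L M (F i))
      = (\<integral>\<omega>. f (X \<omega>) \<partial>M) * (\<integral>\<omega>. g (Y \<omega>) \<partial>M) * (\<integral>\<omega>. h (Z \<omega>) \<partial>M)"
    by (simp add: F_def comp_def mult.assoc)
  ultimately show "integrable M (\<lambda>\<omega>. f (X \<omega>) * g (Y \<omega>) * h (Z \<omega>))"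
    and "(\<integral>\<omega>. f (X \<omega>) * g (Y \<omega>) * h (Z \<omega>) \<partial>M)
       = (\<integral>\<omega>. f (X \<omega>) \<partial>M) * (\<integral>\<omega>. g (Y \<omega>) \<partial>M) * (\<integral>\<omega>. h (Z \<omega>) \<partial>M)"
    using indep_vars_integrable[of "{0, 1, 2}" F] indep_vars_lebesgue_integral[of "{0, 1, 2}" F]
    by simp_all
qed
lemma (in finite_measure)
  fixes S :: "'a \<Rightarrow> 's::finite" and g :: "'s \<Rightarrow> real"
  assumes [measurable]: "S \<in> measurable M (count_space UNIV)"
  shows integrable_fun_finite_rv: "integrable M (\<lambda>\<omega>. g (S \<omega>))"
    and integral_fun_finite_rv:
      "(\<integral>\<omega>. g (S \<omega>) \<partial>M) = (\<Sum>s\<in>UNIV. g s * measure M {\<omega>\<in>space M. S \<omega> = s})"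
proof -
  have eq: "g (S \<omega>) = (\<Sum>s\<in>UNIV. g s * indicator {\<omega>\<in>space M. S \<omega> = s} \<omega>)"
    if "\<omega> \<in> space M" for \<omega>
    using that by (simp add: indicator_def if_distrib sum.If_cases)
  have int_sum: "integrable M (\<lambda>\<omega>. \<Sum>s\<in>UNIV. g s * indicator {\<omega>\<in>space M. S \<omega> = s} \<omega>)"
    by (intro Bochner_Integration.integrable_sum integrable_mult_right integrable_real_indicator)
      (simp_all add: emeasure_finite less_top[symmetric])
  have integral_sum: "(\<integral>\<omega>. (\<Sum>s\<in>UNIV. g s * indicator {\<omega>\<in>space M. S \<omega> = s} \<omega>) \<partial>M)
      = (\<Sum>s\<in>UNIV. g s * measure M {\<omega>\<in>space M. S \<omega> = s})"
    by (subst Bochner_Integration.integral_sum)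
      (auto intro!: integrable_real_indicator simp: emeasure_finite less_top[symmetric])
  show "integrable M (\<lambda>\<omega>. g (S \<omega>))"
    using int_sum by (subst Bochner_Integration.integrable_cong[OF refl]) (rule eq)
  show "(\<integral>\<omega>. g (S \<omega>) \<partial>M) = (\<Sum>s\<in>UNIV. g s * measure M {\<omega>\<in>space M. S \<omega> = s})"
    using Bochner_Integration.integral_cong[OF refl eq] integral_sum by (rule trans)
qed

lemma (in prob_space) measure_uniform_on:
  fixes S :: "'a \<Rightarrow> 's::finite"
  assumes "S \<in> measurable M (count_space UNIV)" and "D \<noteq> {}"
    and unif: "\<And>s. s \<in> D \<Longrightarrow> measure M {\<omega>\<in>space M. S \<omega> = s} = 1 / real (card D)"
  shows "measure M {\<omega>\<in>space M. S \<omega> = s} = (if s \<in> D then 1 / real (card D) else 0)"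
proof -
  let ?p = "\<lambda>s. measure M {\<omega>\<in>space M. S \<omega> = s}"
  have "sum ?p UNIV = 1"
    using integral_fun_finite_rv[OF assms(1), of "\<lambda>_. 1"] by (simp add: prob_space)
  moreover have "sum ?p D = 1"
    using unif \<open>D \<noteq> {}\<close> by simp
  moreover have "sum ?p UNIV = sum ?p (UNIV - D) + sum ?p D"
    by (rule sum.subset_diff) simp_all
  ultimately have "sum ?p (UNIV - D) = 0"
    by simp
  then have "?p s = 0" if "s \<notin> D"
    using that by (simp add: sum_nonneg_eq_0_iff)
  then show ?thesis
    using unif by simp
qed

lemma (in prob_space) sum_measure_uniform_on:
  fixes S :: "'a \<Rightarrow> 's::finite" and f :: "'s \<Rightarrow> 'b::real_vector"
  assumes "S \<in> measurable M (count_space UNIV)" and "D \<noteq> {}"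
    and "\<And>s. s \<in> D \<Longrightarrow> measure M {\<omega>\<in>space M. S \<omega> = s} = 1 / real (card D)"
  shows "(\<Sum>s\<in>UNIV. measure M {\<omega>\<in>space M. S \<omega> = s} *\<^sub>R f s) = (1 / real (card D)) *\<^sub>R (\<Sum>s\<in>D. f s)"
proof -
  have "(\<Sum>s\<in>UNIV. measure M {\<omega>\<in>space M. S \<omega> = s} *\<^sub>R f s)
      = (\<Sum>s\<in>UNIV. if s \<in> D then (1 / real (card D)) *\<^sub>R f s else 0)"
    by (intro sum.cong) (simp_all add: measure_uniform_on[OF assms])
  also have "\<dots> = (1 / real (card D)) *\<^sub>R (\<Sum>s\<in>D. f s)"
    by (simp only: sum.inter_restrict[OF finite, symmetric] Int_UNIV_left scaleR_sum_right)
  finally show ?thesis .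
qed

lemma integrable_mult_of_square_integrable:
  fixes p q :: "'a \<Rightarrow> real"
  assumes [measurable]: "p \<in> borel_measurable M" "q \<in> borel_measurable M"
    and "integrable M (\<lambda>\<omega>. (p \<omega>)\<^sup>2)" "integrable M (\<lambda>\<omega>. (q \<omega>)\<^sup>2)"
  shows "integrable M (\<lambda>\<omega>. p \<omega> * q \<omega>)"
proof (rule Bochner_Integration.integrable_bound)
  show "integrable M (\<lambda>\<omega>. (p \<omega>)\<^sup>2 + (q \<omega>)\<^sup>2)"
    using assms by simp
  show "AE \<omega> in M. norm (p \<omega> * q \<omega>) \<le> norm ((p \<omega>)\<^sup>2 + (q \<omega>)\<^sup>2)"
  proof (rule AE_I2)
    fix \<omega>
    have "2 * (\<bar>p \<omega>\<bar> * \<bar>q \<omega>\<bar>) \<le> (p \<omega>)\<^sup>2 + (q \<omega>)\<^sup>2"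
      using sum_squares_bound[of "\<bar>p \<omega>\<bar>" "\<bar>q \<omega>\<bar>"] by (simp add: power2_abs mult.assoc)
    moreover have "0 \<le> \<bar>p \<omega>\<bar> * \<bar>q \<omega>\<bar>"
      by simp
    ultimately have "\<bar>p \<omega>\<bar> * \<bar>q \<omega>\<bar> \<le> (p \<omega>)\<^sup>2 + (q \<omega>)\<^sup>2"
      by linarith
    then show "norm (p \<omega> * q \<omega>) \<le> norm ((p \<omega>)\<^sup>2 + (q \<omega>)\<^sup>2)"
      by (simp add: abs_mult)
  qed
qed measurable

lemma cov_matrix_cong:
  assumes "\<And>\<omega>. \<omega> \<in> space M \<Longrightarrow> X \<omega> = Y \<omega>"
  shows "cov_matrix M X = cov_matrix M Y"
  using assms by (simp add: cov_matrix_def cong: Bochner_Integration.integral_cong)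

lemma borel_measurable_nth_diff: "(\<lambda>u::real^'n::finite. u $ k - c) \<in> borel_measurable borel"
  by (intro borel_measurable_continuous_onI continuous_intros)

locale indep_noise = prob_space +
  fixes \<theta> :: "'a \<Rightarrow> real^'n::finite" and S :: "'a \<Rightarrow> 's::finite" and \<Gamma> :: "'a \<Rightarrow> real"
  assumes \<theta>_rv: "\<theta> \<in> borel_measurable M"
    and S_rv: "S \<in> measurable M (count_space UNIV)"
    and \<Gamma>_rv: "\<Gamma> \<in> borel_measurable M"
    and \<theta>_sq: "\<And>k. integrable M (\<lambda>\<omega>. (\<theta> \<omega> $ k)\<^sup>2)"
    and \<Gamma>_sq: "integrable M (\<lambda>\<omega>. (\<Gamma> \<omega>)\<^sup>2)"
    and \<Gamma>_mean: "(\<integral>\<omega>. \<Gamma> \<omega> \<partial>M) = 0"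
    and indep: "indep3 M borel (count_space UNIV) borel \<theta> S \<Gamma>"
begin

lemma measurable_nth: "(\<lambda>\<omega>. \<theta> \<omega> $ k) \<in> borel_measurable M"
  using measurable_compose[OF \<theta>_rv borel_measurable_nth_diff[of k 0]] by simp

lemma integrable_nth: "integrable M (\<lambda>\<omega>. \<theta> \<omega> $ k)"
  using square_integrable_imp_integrable[OF measurable_nth \<theta>_sq] .

lemma integrable_noise: "integrable M \<Gamma>"
  using square_integrable_imp_integrable[OF \<Gamma>_rv \<Gamma>_sq] .

lemma
  fixes g :: "'s \<Rightarrow> real"
  shows integrable_nth_mult_noise: "integrable M (\<lambda>\<omega>. (\<theta> \<omega> $ k - c) * g (S \<omega>) * \<Gamma> \<omega>)"
    and integral_nth_mult_noise: "(\<integral>\<omega>. (\<theta> \<omega> $ k - c) * g (S \<omega>) * \<Gamma> \<omega> \<partial>M) = 0"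
proof -
  have "integrable M (\<lambda>\<omega>. \<theta> \<omega> $ k - c)"
    using integrable_nth by simp
  then show "integrable M (\<lambda>\<omega>. (\<theta> \<omega> $ k - c) * g (S \<omega>) * \<Gamma> \<omega>)"
    and "(\<integral>\<omega>. (\<theta> \<omega> $ k - c) * g (S \<omega>) * \<Gamma> \<omega> \<partial>M) = 0"
    using indep3_integral_mult[where f = "\<lambda>u. u $ k - c" and g = g and h = "\<lambda>y. y",
        OF indep \<theta>_rv S_rv \<Gamma>_rv borel_measurable_nth_diff _ measurable_ident_sets[OF refl] _
        integrable_fun_finite_rv[OF S_rv] integrable_noise] \<Gamma>_mean
    by simp_all
qed

lemma
  fixes g :: "'s \<Rightarrow> real"
  shows integrable_mult_noise: "integrable M (\<lambda>\<omega>. \<Gamma> \<omega> * g (S \<omega>))"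
    and integral_mult_noise: "(\<integral>\<omega>. \<Gamma> \<omega> * g (S \<omega>) \<partial>M) = 0"
  using indep3_integral_mult[where f = "\<lambda>_. 1" and g = g and h = "\<lambda>y. y",
      OF indep \<theta>_rv S_rv \<Gamma>_rv borel_measurable_const _ measurable_ident_sets[OF refl] _
      integrable_fun_finite_rv[OF S_rv] integrable_noise] \<Gamma>_mean
  by (simp_all add: mult.commute)

lemma
  fixes g :: "'s \<Rightarrow> real"
  shows integrable_mult_noise_sq: "integrable M (\<lambda>\<omega>. g (S \<omega>) * (\<Gamma> \<omega>)\<^sup>2)"
    and integral_mult_noise_sq:
      "(\<integral>\<omega>. g (S \<omega>) * (\<Gamma> \<omega>)\<^sup>2 \<partial>M) = (\<integral>\<omega>. g (S \<omega>) \<partial>M) * (\<integral>\<omega>. (\<Gamma> \<omega>)\<^sup>2 \<partial>M)"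
proof -
  have "(\<lambda>y::real. y\<^sup>2) \<in> borel_measurable borel"
    by (intro borel_measurable_continuous_onI continuous_intros)
  then show "integrable M (\<lambda>\<omega>. g (S \<omega>) * (\<Gamma> \<omega>)\<^sup>2)"
    and "(\<integral>\<omega>. g (S \<omega>) * (\<Gamma> \<omega>)\<^sup>2 \<partial>M) = (\<integral>\<omega>. g (S \<omega>) \<partial>M) * (\<integral>\<omega>. (\<Gamma> \<omega>)\<^sup>2 \<partial>M)"
    using indep3_integral_mult[where f = "\<lambda>_. 1" and g = g and h = "\<lambda>y. y\<^sup>2",
        OF indep \<theta>_rv S_rv \<Gamma>_rv borel_measurable_const _ _ _
        integrable_fun_finite_rv[OF S_rv] \<Gamma>_sq]
    by (simp_all add: prob_space)
qed

lemma integrable_centered_nth_mult: "integrable M (\<lambda>\<omega>. (\<theta> \<omega> $ i - a) * (\<theta> \<omega> $ j - b))"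
proof -
  have "integrable M (\<lambda>\<omega>. \<theta> \<omega> $ i * \<theta> \<omega> $ j - b * \<theta> \<omega> $ i - a * \<theta> \<omega> $ j + a * b)"
    using integrable_mult_of_square_integrable[OF measurable_nth measurable_nth \<theta>_sq \<theta>_sq]
      integrable_nth
    by (intro Bochner_Integration.integrable_add Bochner_Integration.integrable_diff
        integrable_mult_right) simp_all
  then show ?thesis
    by (simp add: algebra_simps)
qed

lemma cov_matrix_add_noise_nth:
  "cov_matrix M (\<lambda>\<omega>. \<theta> \<omega> + \<Gamma> \<omega> *\<^sub>R V (S \<omega>)) $ i $ j
    = cov_matrix M \<theta> $ i $ j + (\<integral>\<omega>. (\<Gamma> \<omega>)\<^sup>2 \<partial>M) * (\<integral>\<omega>. V (S \<omega>) $ i * V (S \<omega>) $ j \<partial>M)"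
proof -
  define m where "m k = (\<integral>\<omega>. \<theta> \<omega> $ k \<partial>M)" for k
  have mean: "(\<integral>\<omega>. \<theta> \<omega> $ k + \<Gamma> \<omega> * V (S \<omega>) $ k \<partial>M) = m k" for k
    using integrable_mult_noise[of "\<lambda>s. V s $ k"] integral_mult_noise[of "\<lambda>s. V s $ k"]
      integrable_nth[of k]
    by (simp add: m_def)
  have "cov_matrix M (\<lambda>\<omega>. \<theta> \<omega> + \<Gamma> \<omega> *\<^sub>R V (S \<omega>)) $ i $ j
      = (\<integral>\<omega>. (\<theta> \<omega> $ i + \<Gamma> \<omega> * V (S \<omega>) $ i - m i)
          * (\<theta> \<omega> $ j + \<Gamma> \<omega> * V (S \<omega>) $ j - m j) \<partial>M)"
    by (simp add: cov_matrix_def mean)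
  also have "\<dots> = (\<integral>\<omega>. (\<theta> \<omega> $ i - m i) * (\<theta> \<omega> $ j - m j)
          + (\<theta> \<omega> $ i - m i) * V (S \<omega>) $ j * \<Gamma> \<omega>
          + (\<theta> \<omega> $ j - m j) * V (S \<omega>) $ i * \<Gamma> \<omega>
          + V (S \<omega>) $ i * V (S \<omega>) $ j * (\<Gamma> \<omega>)\<^sup>2 \<partial>M)"
    by (rule Bochner_Integration.integral_cong) (simp_all add: algebra_simps power2_eq_square)
  also have "\<dots> = cov_matrix M \<theta> $ i $ j
      + (\<integral>\<omega>. V (S \<omega>) $ i * V (S \<omega>) $ j \<partial>M) * (\<integral>\<omega>. (\<Gamma> \<omega>)\<^sup>2 \<partial>M)"
    using integrable_centered_nth_mult[of i "m i" j "m j"]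
      integrable_nth_mult_noise[of i "m i" "\<lambda>s. V s $ j"] integral_nth_mult_noise[of i "m i" "\<lambda>s. V s $ j"]
      integrable_nth_mult_noise[of j "m j" "\<lambda>s. V s $ i"] integral_nth_mult_noise[of j "m j" "\<lambda>s. V s $ i"]
      integrable_mult_noise_sq[of "\<lambda>s. V s $ i * V s $ j"] integral_mult_noise_sq[of "\<lambda>s. V s $ i * V s $ j"]
    by (simp add: cov_matrix_def m_def)
  finally show ?thesis
    by (simp only: mult.commute)
qed

lemma cov_matrix_add_noise:
  "cov_matrix M (\<lambda>\<omega>. \<theta> \<omega> + \<Gamma> \<omega> *\<^sub>R V (S \<omega>))
    = cov_matrix M \<theta> + (\<integral>\<omega>. (\<Gamma> \<omega>)\<^sup>2 \<partial>M) *\<^sub>R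
        (\<Sum>s\<in>UNIV. measure M {\<omega>\<in>space M. S \<omega> = s} *\<^sub>R outer (V s) (V s))"
proof -
  have "(\<integral>\<omega>. V (S \<omega>) $ i * V (S \<omega>) $ j \<partial>M)
      = (\<Sum>s\<in>UNIV. measure M {\<omega>\<in>space M. S \<omega> = s} * (V s $ i * V s $ j))" for i j
    using integral_fun_finite_rv[OF S_rv, of "\<lambda>s. V s $ i * V s $ j"] by (simp add: mult_ac)
  then show ?thesis
    using cov_matrix_add_noise_nth by (simp add: vec_eq_iff outer_def sum_distrib_left)
qed

end

theorem lemma8:
  fixes E :: "('n::finite \<times> 'n) set" and x :: "'n \<Rightarrow> 'n \<Rightarrow> real"
    and T :: "'n set" and t :: 'n
    and M :: "'a measure"
    and \<theta> \<theta>h :: "'a \<Rightarrow> real^'n" and S :: "'a \<Rightarrow> 'n" and \<Gamma> :: "'a \<Rightarrow> real"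
    and \<sigma>\<Gamma>2 :: real
  assumes net: "valid_network E x" and conn: "connected_network E"
    and T2: "card T \<ge> 2" and tT: "t \<in> T"
    and P: "prob_space M"
    and \<theta>_rv: "\<theta> \<in> borel_measurable M"
    and \<theta>_sq: "\<And>k. integrable M (\<lambda>\<omega>. (\<theta> \<omega> $ k)^2)"
    and \<theta>_t: "\<And>\<omega>. \<omega> \<in> space M \<Longrightarrow> \<theta> \<omega> $ t = 0"
    and S_rv: "S \<in> measurable M (count_space UNIV)"
    and S_unif: "\<And>s. s \<in> T - {t} \<Longrightarrow>
                   measure M {\<omega>\<in>space M. S \<omega> = s} = 1 / real (card T - 1)"
    and \<Gamma>_rv: "\<Gamma> \<in> borel_measurable M"
    and \<Gamma>_sq: "integrable M (\<lambda>\<omega>. (\<Gamma> \<omega>)^2)"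
    and \<Gamma>_mean: "integral\<^sup>L M \<Gamma> = 0"
    and \<Gamma>_var: "integral\<^sup>L M (\<lambda>\<omega>. (\<Gamma> \<omega> - integral\<^sup>L M \<Gamma>)^2) = \<sigma>\<Gamma>2"
    and indep: "indep3 M borel (count_space UNIV) borel \<theta> S \<Gamma>"
    and \<theta>h_t: "\<And>\<omega>. \<omega> \<in> space M \<Longrightarrow> \<theta>h \<omega> $ t = 0"
    and \<theta>h_eq: "\<And>\<omega>. \<omega> \<in> space M \<Longrightarrow>
         susceptance E x *v \<theta>h \<omega> = susceptance E x *v \<theta> \<omega> + \<Gamma> \<omega> *\<^sub>R uvec (S \<omega>) t"
  shows "cov_matrix M \<theta>h = cov_matrix M \<theta>
           + (\<sigma>\<Gamma>2 / real (card T - 1)) *\<^sub>R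
               (\<Sum>s\<in>T - {t}. outer (vvec (susceptance E x) s t) (vvec (susceptance E x) s t))"
proof -
  let ?v = "\<lambda>s. vvec (susceptance E x) s t"
  have response: "\<theta>h \<omega> = \<theta> \<omega> + \<Gamma> \<omega> *\<^sub>R ?v (S \<omega>)" if "\<omega> \<in> space M" for \<omega>
    using susceptance_injection_response[OF net conn \<theta>_t[OF that] \<theta>h_t[OF that] \<theta>h_eq[OF that]] .
  have "card (T - {t}) = card T - 1"
    using tT by (simp add: card_Diff_singleton)
  moreover have "T - {t} \<noteq> {}"
  proof
    assume "T - {t} = {}"
    then have "card (T - {t}) = 0"
      by simp
    then show False
      using \<open>card (T - {t}) = card T - 1\<close> T2 by arith
  qed
  ultimately have uniform_sum: "(\<Sum>s\<in>UNIV. measure M {\<omega>\<in>space M. S \<omega> = s} *\<^sub>R f s)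
      = (1 / real (card T - 1)) *\<^sub>R (\<Sum>s\<in>T - {t}. f s)" for f :: "'n \<Rightarrow> real^'n^'n"
    using prob_space.sum_measure_uniform_on[OF P S_rv, of "T - {t}"] S_unif by simp
  interpret indep_noise M \<theta> S \<Gamma>
    using P \<theta>_rv S_rv \<Gamma>_rv \<theta>_sq \<Gamma>_sq \<Gamma>_mean indep
    unfolding indep_noise_def indep_noise_axioms_def by blast
  have "cov_matrix M \<theta>h = cov_matrix M (\<lambda>\<omega>. \<theta> \<omega> + \<Gamma> \<omega> *\<^sub>R ?v (S \<omega>))"
    using response by (rule cov_matrix_cong)
  also have "\<dots> = cov_matrix M \<theta>
      + \<sigma>\<Gamma>2 *\<^sub>R (\<Sum>s\<in>UNIV. measure M {\<omega>\<in>space M. S \<omega> = s} *\<^sub>R outer (?v s) (?v s))"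
    using cov_matrix_add_noise \<Gamma>_var \<Gamma>_mean by simp
  also have "(\<Sum>s\<in>UNIV. measure M {\<omega>\<in>space M. S \<omega> = s} *\<^sub>R outer (?v s) (?v s))
      = (1 / real (card T - 1)) *\<^sub>R (\<Sum>s\<in>T - {t}. outer (?v s) (?v s))"
    by (rule uniform_sum)
  finally show ?thesis
    by (simp only: scaleR_scaleR times_divide_eq_right mult_1_right)
qed

end
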